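(* Let $n$ be the number of worker nodes, let $\tilde q\ge n$ be a prime, and let $1\le k_A\le n$. Let $\mathbf{P}$ be the $\tilde q\times\tilde q$ circulant permutation matrix whose first row is $[0\ 1\ 0\ \cdots\ 0]$ and whose row $i$ is the first row cyclically shifted by $i$. Split $\mathbf{A}\in\mathbb{R}^{t\times r}$ into $k_A(\tilde q-1)$ equal block-columns $\mathbf{A}_{\langle i,j\rangle}$, $i\in\{0,\dots,k_A-1\}$, $j\in\{0,\dots,\tilde q-2\}$, and define $\mathbf{A}_{\langle i,\tilde q-1\rangle} = -\sum_{j=0}^{\tilde q-2}\mathbf{A}_{\langle i,j\rangle}$. Let $\mathbf{G}^{circ}$ be the $k_A\tilde q\times n\tilde q$ matrix with $(i,j)$-th $\tilde q\times\tilde q$ block $\mathbf{P}^{ji}$. Worker $i$ stores $\hat{\mathbf{A}}_{\langle i,j\rangle}=\sum_{\alpha,\beta}\mathbf{G}^{circ}(\alpha\tilde q+\beta, i\tilde q+j)\mathbf{A}_{\langle\alpha,\beta\rangle}$ for $j\in\{0,\dots,\tilde q-1\}$ and $\mathbf{x}$, and returns $\hat{\mathbf{A}}_{\langle i,j\rangle}^T\mathbf{x}$. Then the threshold of the scheme is $k_A$: for any distinct $i_0,\dots,i_{k_A-1}\in\{0,\dots,n-1\}$ and any coordinate position, the vector $\mathbf{m}=[\mathbf{m}_{\langle\alpha,\beta\rangle}]\in\mathbb{R}^{1\times k_A\tilde q}$ of the corresponding entries of $\mathbf{A}_{\langle\alpha,\beta\rangle}^T\mathbf{x}$ is uniquely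 determined by $\mathbf{c}=\mathbf{m}\tilde{\mathbf{G}}$ (where $\tilde{\mathbf{G}}$ consists of block-columns $i_0,\dots,i_{k_A-1}$ of $\mathbf{G}^{circ}$), and it is computed by the following procedure: apply the $\tilde q$-point DFT to each length-$\tilde q$ block $\mathbf{c}_{i_b}$ of $\mathbf{c}$; for each $k\in\{1,\dots,\tilde q-1\}$ collect the $k$-th Fourier coefficients of the $k_A$ blocks and solve the $k_A\times k_A$ system with matrix $\tilde{\mathbf{G}}^{\mathcal F}_d[k]$ whose $(a,b)$ entry is $\omega_{\tilde q}^{a i_b k}$ ($a,b\in\{0,\dots,k_A-1\}$); set the $0$-th Fourier coefficients of all blocks of $\mathbf{m}$ to zero; undo the regrouping and apply the inverse DFT to each block. Each $\tilde{\mathbf{G}}^{\mathcal F}_d[k]$ is nonsingular, and the worst-case condition number of these recovery matrices is at most $O(\tilde q^{\,\tilde q-k_A+c_1})$ with $c_1=5.5$.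
   Context: $\omega_{\tilde q}=e^{\mathrm{i}2\pi/\tilde q}$; the $\tilde q$-point DFT matrix is $\mathbf{W}(i,j)=\omega_{\tilde q}^{ij}/\sqrt{\tilde q}$. For a square matrix, $\kappa(\mathbf{M})=\|\mathbf{M}\|\|\mathbf{M}^{-1}\|$ with $\|\cdot\|$ the largest singular value. A scheme has threshold $\tau$ if the master node can decode $\mathbf{A}^T\mathbf{x}$ from the results of any $\tau$ workers. *)

theory Defs
  imports "HOL-Analysis.Analysis" "Jordan_Normal_Form.Determinant"
begin

definition omega :: "nat \<Rightarrow> complex" where
  "omega q = cis (2 * pi / real q)"

definition circP :: "nat \<Rightarrow> real mat" where
  "circP q = mat q q (\<lambda>(a, b). if b = (a + 1) mod q then 1 else 0)"

definition Gcirc :: "nat \<Rightarrow> nat \<Rightarrow> nat \<Rightarrow> real mat" where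
  "Gcirc kA n q = mat (kA * q) (n * q)
     (\<lambda>(r, s). (circP q ^\<^sub>m ((s div q) * (r div q))) $$ (r mod q, s mod q))"

(* block-column A_<alpha,beta> (t x w) of A, for beta < q-1; the last one is minus the sum.
   Block-columns are ordered lexicographically: block number alpha*(q-1)+beta. *)
definition Ablk :: "nat \<Rightarrow> nat \<Rightarrow> (nat \<Rightarrow> nat \<Rightarrow> real) \<Rightarrow> nat \<Rightarrow> nat \<Rightarrow> nat \<Rightarrow> nat \<Rightarrow> real" where
  "Ablk q w A \<alpha> \<beta> s p =
     (if \<beta> < q - 1 then A s ((\<alpha> * (q - 1) + \<beta>) * w + p)
      else - (\<Sum>\<beta>'<q - 1. A s ((\<alpha> * (q - 1) + \<beta>') * w + p)))"

definition Ahat :: "nat \<Rightarrow> nat \<Rightarrow> nat \<Rightarrow> nat \<Rightarrow> (nat \<Rightarrow> nat \<Rightarrow> real) \<Rightarrow> nat \<Rightarrow> nat \<Rightarrow> nat \<Rightarrow> nat \<Rightarrow> real" where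
  "Ahat kA n q w A i j s p =
     (\<Sum>\<alpha><kA. \<Sum>\<beta><q. Gcirc kA n q $$ (\<alpha> * q + \<beta>, i * q + j) * Ablk q w A \<alpha> \<beta> s p)"

definition matT_x :: "nat \<Rightarrow> (nat \<Rightarrow> nat \<Rightarrow> real) \<Rightarrow> (nat \<Rightarrow> real) \<Rightarrow> nat \<Rightarrow> real" where
  "matT_x t M x p = (\<Sum>s<t. M s p * x s)"

definition dft :: "nat \<Rightarrow> (nat \<Rightarrow> complex) \<Rightarrow> nat \<Rightarrow> complex" where
  "dft q f k = (\<Sum>j<q. (omega q ^ (k * j) / complex_of_real (sqrt (real q))) * f j)"

definition idft :: "nat \<Rightarrow> (nat \<Rightarrow> complex) \<Rightarrow> nat \<Rightarrow> complex" where
  "idft q g j = (\<Sum>k<q. (cnj (omega q) ^ (j * k) / complex_of_real (sqrt (real q))) * g k)"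

definition GFd :: "nat \<Rightarrow> nat \<Rightarrow> (nat \<Rightarrow> nat) \<Rightarrow> nat \<Rightarrow> complex mat" where
  "GFd q kA idx k = mat kA kA (\<lambda>(a, b). omega q ^ (a * idx b * k))"

(* Decoding procedure. c b j = j-th entry of block c_{i_b}.  Returns m_<alpha,j>. *)
definition decode :: "nat \<Rightarrow> nat \<Rightarrow> (nat \<Rightarrow> nat) \<Rightarrow> (nat \<Rightarrow> nat \<Rightarrow> real) \<Rightarrow> nat \<Rightarrow> nat \<Rightarrow> complex" where
  "decode q kA idx c \<alpha> j =
     (let chat = (\<lambda>b. dft q (\<lambda>j'. complex_of_real (c b j')));
          mhat = (\<lambda>k. if k = 0 then 0\<^sub>v kA
                      else (THE y. y \<in> carrier_vec kA \<and>
                              (\<forall>b<kA. (\<Sum>a<kA. y $ a * GFd q kA idx k $$ (a, b)) = chat b k)))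
      in idft q (\<lambda>k. mhat k $ \<alpha>) j)"

definition vnorm2 :: "complex vec \<Rightarrow> real" where
  "vnorm2 v = sqrt (\<Sum>i<dim_vec v. (cmod (v $ i))\<^sup>2)"

definition spec_norm :: "complex mat \<Rightarrow> real" where
  "spec_norm M = Sup {vnorm2 (M *\<^sub>v v) | v. v \<in> carrier_vec (dim_col M) \<and> vnorm2 v = 1}"

definition mat_inv :: "complex mat \<Rightarrow> complex mat" where
  "mat_inv M = (THE B. B \<in> carrier_mat (dim_row M) (dim_row M) \<and> inverts_mat M B \<and> inverts_mat B M)"

definition cond_num :: "complex mat \<Rightarrow> real" where
  "cond_num M = spec_norm M * spec_norm (mat_inv M)"

end

(* Column block i of G^circ applies the cyclic shift P^(i alpha) to the alpha-th block of m, and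
   the DFT turns this shift into multiplication by omega^(i alpha k). So the k-th Fourier
   coefficient of the coded block c_i is a polynomial in omega^(i k) whose coefficients are the
   k-th Fourier coefficients of the blocks of m. For 0 < k < q and q prime the nodes
   omega^(i_b k) are distinct, hence this Vandermonde system determines them; the 0-th
   coefficients vanish because every block of m sums to zero. Inverting the DFT recovers m.

   The inverse of a Vandermonde matrix consists of the coefficients of the Lagrange basis
   polynomials. For nodes among the q-th roots of unity such a coefficient is bounded by the
   maximum modulus of the polynomial on the roots of unity, which is at most q^(q - K): distinct
   roots of unity lie between 2/q and 2 apart, and the product of the distances from a root of
   unity to all the others does not depend on the root. Bounding spectral norms by entries
   then gives a condition number of at most q^(q - K) K^3. *)

theory Submission
  imports Defs "HOL-Number_Theory.Cong"
begin

unbundle no vec_syntax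

section \<open>Roots of unity and the discrete Fourier transform\<close>

lemma omega_power: "omega q ^ j = cis (2 * pi * real j / real q)"
  unfolding omega_def Complex.DeMoivre by (simp add: mult_ac)

lemma norm_omega [simp]: "norm (omega q) = 1"
  by (simp add: omega_def)

lemma norm_omega_power [simp]: "norm (omega q ^ j) = 1"
  by (simp add: norm_power)

lemma norm_omega_power_diff_le: "norm (omega q ^ j - omega q ^ l) \<le> 2"
  using norm_triangle_ineq4[of "omega q ^ j" "omega q ^ l"] by simp

lemma omega_power_eq_1:
  assumes "q > 0"
  shows "omega q ^ q = 1"
  using assms by (simp add: omega_power)

lemma omega_power_mod:
  assumes "q > 0"
  shows "omega q ^ (j mod q) = omega q ^ j"
proof -
  have "omega q ^ j = (omega q ^ q) ^ (j div q) * omega q ^ (j mod q)"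
    by (metis mult_div_mod_eq power_add power_mult)
  then show ?thesis
    using omega_power_eq_1[OF assms] by simp
qed

lemma omega_power_eq_iff:
  assumes "q > 0" "j < q" "l < q"
  shows "omega q ^ j = omega q ^ l \<longleftrightarrow> j = l"
  using inj_onD[OF bij_betw_imp_inj_on[OF Complex.bij_betw_roots_unity[OF assms(1)]], of j l] assms
  by (auto simp: omega_power)

lemma inj_on_omega_power:
  assumes "q > 0" "inj_on e A" "\<forall>b\<in>A. e b < q"
  shows "inj_on (\<lambda>b. omega q ^ e b) A"
  using assms omega_power_eq_iff[OF assms(1)] by (auto simp: inj_on_def)

lemma omega_power_mult_cnj: "omega q ^ a * cnj (omega q) ^ a = 1"
  using complex_norm_square[of "omega q ^ a"] by simp

lemma sum_omega_power_orthogonal: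
  assumes "q > 0" "l < q" "a < q"
  shows "(\<Sum>k<q. omega q ^ (l * k) * cnj (omega q) ^ (a * k)) = (if l = a then of_nat q else 0)"
proof -
  define r where "r = omega q ^ l * cnj (omega q) ^ a"
  have terms: "omega q ^ (l * k) * cnj (omega q) ^ (a * k) = r ^ k" for k
    by (simp add: r_def power_mult power_mult_distrib)
  show ?thesis
  proof (cases "l = a")
    case True
    then have "r = 1"
      using omega_power_mult_cnj[of q a] by (simp add: r_def)
    then show ?thesis
      unfolding terms using True by simp
  next
    case False
    have "r * omega q ^ a = omega q ^ l"
      using omega_power_mult_cnj[of q a] by (simp add: r_def mult_ac)
    then have "r \<noteq> 1"
      using False omega_power_eq_iff[OF assms] by auto
    moreover have "r ^ q = (omega q ^ q) ^ l * cnj (omega q ^ q) ^ a"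
      by (simp add: r_def power_mult_distrib flip: power_mult) (simp add: mult.commute)
    then have "r ^ q = 1"
      using omega_power_eq_1[OF assms(1)] by simp
    ultimately show ?thesis
      using False by (simp add: terms geometric_sum)
  qed
qed

lemma discrete_fourier_inversion:
  assumes "q > 0" "j < q"
  shows "(\<Sum>k<q. cnj (omega q) ^ (j * k) * (\<Sum>l<q. omega q ^ (k * l) * g l)) = of_nat q * g j"
proof -
  have "(\<Sum>k<q. cnj (omega q) ^ (j * k) * (\<Sum>l<q. omega q ^ (k * l) * g l))
      = (\<Sum>k<q. \<Sum>l<q. g l * (omega q ^ (l * k) * cnj (omega q) ^ (j * k)))"
    by (simp add: sum_distrib_left mult_ac)
  also have "\<dots> = (\<Sum>l<q. g l * (\<Sum>k<q. omega q ^ (l * k) * cnj (omega q) ^ (j * k)))"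
    by (subst sum.swap) (simp add: sum_distrib_left)
  also have "\<dots> = (\<Sum>l<q. if l = j then g l * of_nat q else 0)"
    using sum_omega_power_orthogonal[OF assms(1) _ assms(2)] by (intro sum.cong refl) simp
  also have "\<dots> = of_nat q * g j"
    using assms(2) by simp
  finally show ?thesis .
qed

lemma dft_eq: "dft q f k = (\<Sum>j<q. omega q ^ (k * j) * f j) / complex_of_real (sqrt (real q))"
  unfolding dft_def sum_divide_distrib by (simp add: mult_ac)

lemma idft_eq: "idft q g j = (\<Sum>k<q. cnj (omega q) ^ (j * k) * g k) / complex_of_real (sqrt (real q))"
  unfolding idft_def sum_divide_distrib by (simp add: mult_ac)

lemma idft_dft:
  assumes "q > 0" "j < q"
  shows "idft q (dft q f) j = f j"
proof -
  have "complex_of_real (sqrt (real q)) * complex_of_real (sqrt (real q)) = of_nat q"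
    by (simp flip: of_real_mult)
  then show ?thesis
    using discrete_fourier_inversion[OF assms, of f] assms(1)
    by (simp add: idft_eq dft_eq sum_divide_distrib[symmetric] field_simps)
qed

lemma dft_cong: "(\<And>j. j < q \<Longrightarrow> f j = g j) \<Longrightarrow> dft q f k = dft q g k"
  unfolding dft_def by (intro sum.cong) auto

lemma dft_sum: "dft q (\<lambda>j. \<Sum>a\<in>A. f a j) k = (\<Sum>a\<in>A. dft q (f a) k)"
  unfolding dft_def sum_distrib_left by (rule sum.swap)

lemma dft_0: "dft q f 0 = (\<Sum>j<q. f j) / complex_of_real (sqrt (real q))"
  by (simp add: dft_eq)

lemma dft_cyclic_shift:
  assumes "q > 0"
  shows "dft q (\<lambda>j. \<Sum>\<beta><q. if j = (\<beta> + e) mod q then g \<beta> else 0) k = omega q ^ (k * e) * dft q g k"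
proof -
  have shift: "omega q ^ (k * ((\<beta> + e) mod q)) = omega q ^ (k * e) * omega q ^ (k * \<beta>)" for \<beta>
  proof -
    have "omega q ^ (k * ((\<beta> + e) mod q)) = (omega q ^ ((\<beta> + e) mod q)) ^ k"
      by (metis power_mult mult.commute)
    also have "\<dots> = omega q ^ (k * e) * omega q ^ (k * \<beta>)"
      by (simp add: omega_power_mod[OF assms] power_add algebra_simps flip: power_mult)
    finally show ?thesis .
  qed
  have delta: "(\<Sum>j<q. omega q ^ (k * j) * (if j = (\<beta> + e) mod q then g \<beta> else 0))
      = omega q ^ (k * ((\<beta> + e) mod q)) * g \<beta>" for \<beta>
  proof -
    have "(\<Sum>j<q. omega q ^ (k * j) * (if j = (\<beta> + e) mod q then g \<beta> else 0))
        = (\<Sum>j<q. if j = (\<beta> + e) mod q then omega q ^ (k * j) * g \<beta> else 0)"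
      by (intro sum.cong) auto
    then show ?thesis
      using assms by simp
  qed
  have "(\<Sum>j<q. omega q ^ (k * j) * (\<Sum>\<beta><q. if j = (\<beta> + e) mod q then g \<beta> else 0))
      = (\<Sum>\<beta><q. \<Sum>j<q. omega q ^ (k * j) * (if j = (\<beta> + e) mod q then g \<beta> else 0))"
    unfolding sum_distrib_left by (rule sum.swap)
  also have "\<dots> = (\<Sum>\<beta><q. omega q ^ (k * ((\<beta> + e) mod q)) * g \<beta>)"
    by (simp only: delta)
  also have "\<dots> = omega q ^ (k * e) * (\<Sum>\<beta><q. omega q ^ (k * \<beta>) * g \<beta>)"
    by (simp add: shift sum_distrib_left mult_ac)
  finally show ?thesis
    by (simp add: dft_eq)
qed

section \<open>The circulant code\<close>

lemma index_mult_mat_sum: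
  assumes "A \<in> carrier_mat n m" "B \<in> carrier_mat m p" "i < n" "j < p"
  shows "(A * B) $$ (i, j) = (\<Sum>l<m. A $$ (i, l) * B $$ (l, j))"
  using assms by (auto simp: scalar_prod_def lessThan_atLeast0 intro!: sum.cong)

lemma circP_carrier: "circP q \<in> carrier_mat q q"
  by (simp add: circP_def)

lemma circP_index: "l < q \<Longrightarrow> j < q \<Longrightarrow> circP q $$ (l, j) = (if j = (l + 1) mod q then 1 else 0)"
  by (simp add: circP_def)

lemma circP_power_index:
  assumes "q > 0" "\<beta> < q" "j < q"
  shows "(circP q ^\<^sub>m e) $$ (\<beta>, j) = (if j = (\<beta> + e) mod q then 1 else 0)"
  using assms(3)
proof (induction e arbitrary: j)
  case 0
  then show ?case
    using assms(2) circP_carrier[of q] by simp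
next
  case (Suc e)
  have "(circP q ^\<^sub>m Suc e) $$ (\<beta>, j) = (\<Sum>l<q. (circP q ^\<^sub>m e) $$ (\<beta>, l) * circP q $$ (l, j))"
    using Suc.prems assms(2)
    by (simp only: pow_mat.simps index_mult_mat_sum[OF pow_carrier_mat[OF circP_carrier] circP_carrier])
  also have "\<dots> = (\<Sum>l<q. if l = (\<beta> + e) mod q then (if j = (l + 1) mod q then 1 else 0) else 0)"
    using Suc by (intro sum.cong refl) (simp add: circP_index)
  also have "\<dots> = (if j = (\<beta> + Suc e) mod q then 1 else 0)"
    using assms(1) by (simp add: mod_Suc_eq)
  finally show ?case .
qed

lemma Gcirc_index:
  assumes "q > 0" "\<alpha> < kA" "\<beta> < q" "i < n" "j < q"
  shows "Gcirc kA n q $$ (\<alpha> * q + \<beta>, i * q + j) = (if j = (\<beta> + i * \<alpha>) mod q then 1 else 0)"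
proof -
  have block_lt: "a * q + b < c * q" if "a < c" "b < q" for a b c :: nat
  proof -
    have "a * q + b < (a + 1) * q"
      using that by simp
    also have "\<dots> \<le> c * q"
      using that by (intro mult_right_mono) auto
    finally show ?thesis .
  qed
  have "Gcirc kA n q $$ (\<alpha> * q + \<beta>, i * q + j) = (circP q ^\<^sub>m (i * \<alpha>)) $$ (\<beta>, j)"
    using assms block_lt[of \<alpha> kA \<beta>] block_lt[of i n j] by (simp add: Gcirc_def)
  then show ?thesis
    using assms circP_power_index by simp
qed

lemma dft_Gcirc_block_column:
  assumes "q > 0" "i < n"
  shows "dft q (\<lambda>j. complex_of_real (\<Sum>\<alpha><kA. \<Sum>\<beta><q. f \<alpha> \<beta> * Gcirc kA n q $$ (\<alpha> * q + \<beta>, i * q + j))) k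
       = (\<Sum>\<alpha><kA. dft q (\<lambda>\<beta>. complex_of_real (f \<alpha> \<beta>)) k * (omega q ^ (i * k)) ^ \<alpha>)"
proof -
  have "dft q (\<lambda>j. complex_of_real (\<Sum>\<alpha><kA. \<Sum>\<beta><q. f \<alpha> \<beta> * Gcirc kA n q $$ (\<alpha> * q + \<beta>, i * q + j))) k
      = dft q (\<lambda>j. \<Sum>\<alpha><kA. \<Sum>\<beta><q. if j = (\<beta> + i * \<alpha>) mod q then complex_of_real (f \<alpha> \<beta>) else 0) k"
    using assms by (intro dft_cong) (auto simp: Gcirc_index intro!: sum.cong)
  also have "\<dots> = (\<Sum>\<alpha><kA. omega q ^ (k * (i * \<alpha>)) * dft q (\<lambda>\<beta>. complex_of_real (f \<alpha> \<beta>)) k)"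
    by (subst dft_sum) (simp add: dft_cyclic_shift[OF assms(1)])
  also have "\<dots> = (\<Sum>\<alpha><kA. dft q (\<lambda>\<beta>. complex_of_real (f \<alpha> \<beta>)) k * (omega q ^ (i * k)) ^ \<alpha>)"
    by (simp add: mult_ac flip: power_mult)
  finally show ?thesis .
qed

lemma matT_x_Ahat:
  "matT_x t (Ahat kA n q w A i j) x p =
   (\<Sum>\<alpha><kA. \<Sum>\<beta><q. matT_x t (Ablk q w A \<alpha> \<beta>) x p * Gcirc kA n q $$ (\<alpha> * q + \<beta>, i * q + j))"
proof -
  let ?G = "\<lambda>\<alpha> \<beta>. Gcirc kA n q $$ (\<alpha> * q + \<beta>, i * q + j)"
  have "matT_x t (Ahat kA n q w A i j) x p = (\<Sum>s<t. \<Sum>\<alpha><kA. \<Sum>\<beta><q. ?G \<alpha> \<beta> * Ablk q w A \<alpha> \<beta> s p * x s)"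
    unfolding matT_x_def Ahat_def by (simp add: sum_distrib_right)
  also have "\<dots> = (\<Sum>\<alpha><kA. \<Sum>\<beta><q. \<Sum>s<t. ?G \<alpha> \<beta> * Ablk q w A \<alpha> \<beta> s p * x s)"
    by (subst sum.swap) (simp only: sum.swap[of _ "{..<t}"])
  also have "\<dots> = (\<Sum>\<alpha><kA. \<Sum>\<beta><q. matT_x t (Ablk q w A \<alpha> \<beta>) x p * ?G \<alpha> \<beta>)"
    unfolding matT_x_def by (simp add: sum_distrib_right mult_ac)
  finally show ?thesis .
qed

lemma sum_Ablk_eq_0:
  assumes "q > 0"
  shows "(\<Sum>\<beta><q. Ablk q w A \<alpha> \<beta> s p) = 0"
proof -
  obtain q' where q': "q = Suc q'"
    using assms by (cases q) auto
  have "(\<Sum>\<beta><q'. Ablk q w A \<alpha> \<beta> s p) = (\<Sum>\<beta><q'. A s ((\<alpha> * q' + \<beta>) * w + p))"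
    by (intro sum.cong refl) (simp add: Ablk_def q')
  moreover have "Ablk q w A \<alpha> q' s p = - (\<Sum>\<beta><q'. A s ((\<alpha> * q' + \<beta>) * w + p))"
    by (simp add: Ablk_def q')
  ultimately show ?thesis
    by (simp add: q')
qed

lemma sum_matT_x_Ablk_eq_0:
  assumes "q > 0"
  shows "(\<Sum>\<beta><q. matT_x t (Ablk q w A \<alpha> \<beta>) x p) = 0"
proof -
  have "(\<Sum>\<beta><q. matT_x t (Ablk q w A \<alpha> \<beta>) x p) = (\<Sum>s<t. (\<Sum>\<beta><q. Ablk q w A \<alpha> \<beta> s p) * x s)"
    unfolding matT_x_def sum_distrib_right by (rule sum.swap)
  then show ?thesis
    using sum_Ablk_eq_0[OF assms] by simp
qed

section \<open>Vandermonde matrices and Lagrange interpolation\<close>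

definition vandermonde :: "(nat \<Rightarrow> 'a::comm_ring_1) \<Rightarrow> nat \<Rightarrow> 'a mat" where
  "vandermonde z K = mat K K (\<lambda>(a, b). z b ^ a)"

definition lagrange_basis :: "(nat \<Rightarrow> 'a::field) \<Rightarrow> nat \<Rightarrow> nat \<Rightarrow> 'a poly" where
  "lagrange_basis z K b = (\<Prod>i\<in>{..<K} - {b}. Polynomial.smult (inverse (z b - z i)) [:- z i, 1:])"

definition lagrange_mat :: "(nat \<Rightarrow> 'a::field) \<Rightarrow> nat \<Rightarrow> 'a mat" where
  "lagrange_mat z K = mat K K (\<lambda>(b, a). coeff (lagrange_basis z K b) a)"

lemma vandermonde_carrier: "vandermonde z K \<in> carrier_mat K K"
  by (simp add: vandermonde_def)

lemma vandermonde_dim [simp]: "dim_row (vandermonde z K) = K" "dim_col (vandermonde z K) = K"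
  by (simp_all add: vandermonde_def)

lemma vandermonde_index: "a < K \<Longrightarrow> b < K \<Longrightarrow> vandermonde z K $$ (a, b) = z b ^ a"
  by (simp add: vandermonde_def)

lemma lagrange_mat_carrier: "lagrange_mat z K \<in> carrier_mat K K"
  by (simp add: lagrange_mat_def)

lemma lagrange_mat_dim [simp]: "dim_row (lagrange_mat z K) = K" "dim_col (lagrange_mat z K) = K"
  by (simp_all add: lagrange_mat_def)

lemma lagrange_mat_index: "b < K \<Longrightarrow> a < K \<Longrightarrow> lagrange_mat z K $$ (b, a) = coeff (lagrange_basis z K b) a"
  by (simp add: lagrange_mat_def)

lemma poly_lagrange_basis: "poly (lagrange_basis z K b) x = (\<Prod>i\<in>{..<K} - {b}. (x - z i) / (z b - z i))"
  by (simp add: lagrange_basis_def poly_prod divide_inverse mult.commute left_diff_distrib)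

lemma degree_lagrange_basis:
  assumes "b < K"
  shows "degree (lagrange_basis z K b) < K"
proof -
  let ?f = "\<lambda>i. Polynomial.smult (inverse (z b - z i)) [:- z i, 1:]"
  have "degree (lagrange_basis z K b) \<le> sum (degree \<circ> ?f) ({..<K} - {b})"
    unfolding lagrange_basis_def by (rule degree_prod_sum_le) simp
  also have "\<dots> \<le> (\<Sum>i\<in>{..<K} - {b}. 1)"
    by (intro sum_mono) (simp add: degree_smult_le[THEN order.trans] del: degree_smult_eq)
  also have "\<dots> < K"
    using assms by simp
  finally show ?thesis .
qed

lemma poly_lagrange_basis_node:
  assumes "inj_on z {..<K}" "b < K" "b' < K"
  shows "poly (lagrange_basis z K b) (z b') = (if b' = b then 1 else 0)"
proof (cases "b' = b")
  case True
  have "z b - z i \<noteq> 0" if "i \<in> {..<K} - {b}" for i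
    using that assms inj_on_eq_iff[OF assms(1), of b i] by auto
  then show ?thesis
    using True by (simp add: poly_lagrange_basis)
next
  case False
  then have "b' \<in> {..<K} - {b}"
    using assms by auto
  then show ?thesis
    using False by (simp add: poly_lagrange_basis) blast
qed

lemma poly_eq_sum_lessThan:
  fixes p :: "'a::comm_semiring_1 poly"
  assumes "degree p < K"
  shows "poly p x = (\<Sum>a<K. coeff p a * x ^ a)"
proof -
  have "poly p x = (\<Sum>a\<le>degree p. coeff p a * x ^ a)"
    by (rule poly_altdef)
  also have "\<dots> = (\<Sum>a<K. coeff p a * x ^ a)"
    using assms by (intro sum.mono_neutral_left) (auto simp: coeff_eq_0)
  finally show ?thesis .
qed

lemma lagrange_mat_mult_vandermonde:
  assumes "inj_on z {..<K}"
  shows "lagrange_mat z K * vandermonde z K = 1\<^sub>m K"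
proof (rule eq_matI)
  fix b b' assume "b < dim_row (1\<^sub>m K)" "b' < dim_col (1\<^sub>m K)"
  then have b: "b < K" "b' < K"
    by auto
  have "(lagrange_mat z K * vandermonde z K) $$ (b, b') = (\<Sum>a<K. coeff (lagrange_basis z K b) a * z b' ^ a)"
    using b by (subst index_mult_mat_sum[OF lagrange_mat_carrier vandermonde_carrier])
      (simp_all add: lagrange_mat_index vandermonde_index)
  also have "\<dots> = poly (lagrange_basis z K b) (z b')"
    by (rule poly_eq_sum_lessThan[OF degree_lagrange_basis[OF b(1)], symmetric])
  also have "\<dots> = 1\<^sub>m K $$ (b, b')"
    using b poly_lagrange_basis_node[OF assms b] by simp
  finally show "(lagrange_mat z K * vandermonde z K) $$ (b, b') = 1\<^sub>m K $$ (b, b')" .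
qed (use lagrange_mat_carrier vandermonde_carrier in auto)

lemma vandermonde_mult_lagrange_mat:
  assumes "inj_on z {..<K}"
  shows "vandermonde z K * lagrange_mat z K = 1\<^sub>m K"
  using mat_mult_left_right_inverse[OF lagrange_mat_carrier vandermonde_carrier
      lagrange_mat_mult_vandermonde[OF assms]] .

lemma det_vandermonde_neq_0:
  fixes z :: "nat \<Rightarrow> 'a::field"
  assumes "inj_on z {..<K}"
  shows "det (vandermonde z K) \<noteq> 0"
proof -
  have "det (lagrange_mat z K) * det (vandermonde z K) = 1"
    using det_mult[OF lagrange_mat_carrier[of z K] vandermonde_carrier[of z K]]
      lagrange_mat_mult_vandermonde[OF assms] by simp
  then show ?thesis
    by auto
qed

lemma vandermonde_left_kernel:
  fixes z :: "nat \<Rightarrow> 'a::field"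
  assumes inj: "inj_on z {..<K}" and zero: "\<forall>b<K. (\<Sum>a<K. u a * z b ^ a) = 0" and a': "a' < K"
  shows "u a' = 0"
proof -
  have inverse: "(\<Sum>b<K. z b ^ a * lagrange_mat z K $$ (b, a')) = (if a = a' then 1 else 0)" if "a < K" for a
  proof -
    have "(\<Sum>b<K. z b ^ a * lagrange_mat z K $$ (b, a')) = (vandermonde z K * lagrange_mat z K) $$ (a, a')"
      using that a' by (subst index_mult_mat_sum[OF vandermonde_carrier lagrange_mat_carrier])
        (simp_all add: vandermonde_index)
    then show ?thesis
      using vandermonde_mult_lagrange_mat[OF inj] that a' by simp
  qed
  have "u a' = (\<Sum>a<K. u a * (\<Sum>b<K. z b ^ a * lagrange_mat z K $$ (b, a')))"
    using a' by (simp add: inverse if_distrib cong: if_cong)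
  also have "\<dots> = (\<Sum>b<K. (\<Sum>a<K. u a * z b ^ a) * lagrange_mat z K $$ (b, a'))"
    by (simp add: sum_distrib_left sum_distrib_right mult.assoc) (rule sum.swap)
  also have "\<dots> = 0"
    using zero by simp
  finally show ?thesis .
qed

lemma the_vandermonde_solution:
  fixes z :: "nat \<Rightarrow> 'a::field"
  assumes inj: "inj_on z {..<K}" and sol: "\<And>b. b < K \<Longrightarrow> (\<Sum>a<K. r a * z b ^ a) = h b"
  shows "(THE y. y \<in> carrier_vec K \<and> (\<forall>b<K. (\<Sum>a<K. y $ a * vandermonde z K $$ (a, b)) = h b)) = Matrix.vec K r"
proof (rule the_equality)
  have "(\<Sum>a<K. Matrix.vec K r $ a * vandermonde z K $$ (a, b)) = (\<Sum>a<K. r a * z b ^ a)" if "b < K" for b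
    using that by (intro sum.cong) (auto simp: vandermonde_index)
  then show "Matrix.vec K r \<in> carrier_vec K \<and> (\<forall>b<K. (\<Sum>a<K. Matrix.vec K r $ a * vandermonde z K $$ (a, b)) = h b)"
    using sol by simp
next
  fix y assume y: "y \<in> carrier_vec K \<and> (\<forall>b<K. (\<Sum>a<K. y $ a * vandermonde z K $$ (a, b)) = h b)"
  have "(\<Sum>a<K. (y $ a - r a) * z b ^ a) = (\<Sum>a<K. y $ a * vandermonde z K $$ (a, b)) - (\<Sum>a<K. r a * z b ^ a)"
    if "b < K" for b
    using that by (simp add: vandermonde_index left_diff_distrib sum_subtractf)
  then have "\<forall>b<K. (\<Sum>a<K. (y $ a - r a) * z b ^ a) = 0"
    using y sol by simp
  then have "y $ a - r a = 0" if "a < K" for a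
    using vandermonde_left_kernel[OF inj, where u = "\<lambda>a. y $ a - r a"] that by blast
  then show "y = Matrix.vec K r"
    using y by (intro eq_vecI) auto
qed

lemma mat_inv_vandermonde:
  fixes z :: "nat \<Rightarrow> complex"
  assumes "inj_on z {..<K}"
  shows "mat_inv (vandermonde z K) = lagrange_mat z K"
  unfolding mat_inv_def
proof (rule the_equality)
  show "lagrange_mat z K \<in> carrier_mat (dim_row (vandermonde z K)) (dim_row (vandermonde z K)) \<and>
      inverts_mat (vandermonde z K) (lagrange_mat z K) \<and> inverts_mat (lagrange_mat z K) (vandermonde z K)"
    using lagrange_mat_carrier vandermonde_carrier vandermonde_mult_lagrange_mat[OF assms]
      lagrange_mat_mult_vandermonde[OF assms] by (auto simp: inverts_mat_def)
next
  fix B assume "B \<in> carrier_mat (dim_row (vandermonde z K)) (dim_row (vandermonde z K)) \<and>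
      inverts_mat (vandermonde z K) B \<and> inverts_mat B (vandermonde z K)"
  then have B: "B \<in> carrier_mat K K" "B * vandermonde z K = 1\<^sub>m K"
    using vandermonde_carrier by (auto simp: inverts_mat_def)
  have "B = B * (vandermonde z K * lagrange_mat z K)"
    using B(1) by (simp add: vandermonde_mult_lagrange_mat[OF assms])
  also have "\<dots> = (B * vandermonde z K) * lagrange_mat z K"
    using B(1) vandermonde_carrier lagrange_mat_carrier by (metis assoc_mult_mat)
  also have "\<dots> = lagrange_mat z K"
    using B(2) lagrange_mat_carrier by simp
  finally show "B = lagrange_mat z K" .
qed

section \<open>Condition number of Vandermonde matrices on roots of unity\<close>

lemma vnorm2_mult_mat_vec_le_entry_bound:
  assumes M: "M \<in> carrier_mat K K" and K: "0 < K"
    and bound: "\<And>i j. i < K \<Longrightarrow> j < K \<Longrightarrow> norm (M $$ (i, j)) \<le> B"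
    and v: "v \<in> carrier_vec K" "vnorm2 v = 1"
  shows "vnorm2 (M *\<^sub>v v) \<le> B * real K * sqrt (real K)"
proof -
  have B: "0 \<le> B"
    using bound[OF K K] norm_ge_zero order_trans by blast
  have "(\<Sum>i<K. (norm (v $ i))\<^sup>2) = 1"
    using v by (simp add: vnorm2_def)
  then have v_entry: "norm (v $ j) \<le> 1" if "j < K" for j
    using member_le_sum[of j "{..<K}" "\<lambda>i. (norm (v $ i))\<^sup>2"] that
    by (simp add: power_le_one_iff)
  have Mv_entry: "norm ((M *\<^sub>v v) $ i) \<le> real K * B" if "i < K" for i
  proof -
    have "norm ((M *\<^sub>v v) $ i) = norm (\<Sum>j<K. M $$ (i, j) * v $ j)"
      using that M v by (auto simp: scalar_prod_def lessThan_atLeast0 intro!: sum.cong arg_cong[where f = norm])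
    also have "\<dots> \<le> (\<Sum>j<K. norm (M $$ (i, j)) * norm (v $ j))"
      by (rule order.trans[OF norm_sum]) (simp add: norm_mult)
    also have "\<dots> \<le> (\<Sum>j<K. B * 1)"
      using bound that v_entry B by (intro sum_mono mult_mono) auto
    finally show ?thesis
      by simp
  qed
  have "(\<Sum>i<K. (norm ((M *\<^sub>v v) $ i))\<^sup>2) \<le> (\<Sum>i<K. (real K * B)\<^sup>2)"
    using Mv_entry by (intro sum_mono power_mono) auto
  then have "vnorm2 (M *\<^sub>v v) \<le> sqrt (real K * (real K * B)\<^sup>2)"
    using M by (simp add: vnorm2_def)
  also have "\<dots> = B * real K * sqrt (real K)"
    using B by (simp add: real_sqrt_mult)
  finally show ?thesis .
qed

lemma spec_norm_le_entry_bound: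
  assumes M: "M \<in> carrier_mat K K" and K: "0 < K"
    and bound: "\<And>i j. i < K \<Longrightarrow> j < K \<Longrightarrow> norm (M $$ (i, j)) \<le> B"
  shows "0 \<le> spec_norm M \<and> spec_norm M \<le> B * real K * sqrt (real K)"
proof -
  define S where "S = {vnorm2 (M *\<^sub>v v) | v. v \<in> carrier_vec (dim_col M) \<and> vnorm2 v = 1}"
  have "(\<Sum>i<K. (norm (unit_vec K 0 $ i :: complex))\<^sup>2) = (\<Sum>i<K. if i = 0 then 1 else 0)"
    by (intro sum.cong) auto
  then have "vnorm2 (unit_vec K 0) = 1"
    using K by (simp add: vnorm2_def)
  then have unit_in_S: "vnorm2 (M *\<^sub>v unit_vec K 0) \<in> S"
    unfolding S_def using M by auto
  have upper: "\<forall>s\<in>S. s \<le> B * real K * sqrt (real K)"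
    unfolding S_def using M vnorm2_mult_mat_vec_le_entry_bound[OF M K bound] by auto
  have "0 \<le> vnorm2 (M *\<^sub>v unit_vec K 0)"
    by (simp add: vnorm2_def sum_nonneg)
  also have "\<dots> \<le> Sup S"
    using unit_in_S upper by (intro cSup_upper) (auto simp: bdd_above_def)
  finally show ?thesis
    using unit_in_S upper unfolding spec_norm_def S_def[symmetric]
    by (auto intro: cSup_least)
qed

lemma sin_pi_div_ge:
  assumes "2 \<le> q"
  shows "1 / real q \<le> sin (pi / real q)"
proof -
  define y where "y = pi / real q"
  have y0: "y > 0" and y2: "y \<le> 2"
    using assms pi_less_4 by (simp_all add: y_def field_simps)
  have "(\<Sum>m<3. sin_coeff m * y ^ m) = y"
    by (simp add: eval_nat_numeral sin_coeff_def)
  then have "\<bar>sin y - y\<bar> \<le> y ^ 3 / 6"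
    using Maclaurin_sin_bound[of y 3] y0 by (simp add: fact_numeral)
  moreover have "y ^ 3 / 6 \<le> y * (2 / 3)"
  proof -
    have "y * y \<le> 2 * 2"
      using y0 y2 by (intro mult_mono) auto
    then show ?thesis
      using y0 by (simp add: power3_eq_cube)
  qed
  ultimately have "y / 3 \<le> sin y"
    by linarith
  moreover have "1 / real q \<le> y / 3"
    using pi_gt3 assms by (simp add: y_def field_simps)
  ultimately show ?thesis
    unfolding y_def by linarith
qed

lemma sin_pi_mult_div_ge:
  assumes "1 \<le> d" "d < q"
  shows "1 / real q \<le> sin (pi * real d / real q)"
proof -
  have q: "2 \<le> q"
    using assms by simp
  have low_half: "1 / real q \<le> sin (pi * real d' / real q)" if "1 \<le> d'" "2 * d' \<le> q" for d'
  proof -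
    have "sin (pi / real q) \<le> sin (pi * real d' / real q)"
      using that q pi_gt_zero
      by (intro sin_monotone_2pi_le) (auto simp: field_simps intro: mult_nonneg_nonneg order.trans[of _ 0])
    then show ?thesis
      using sin_pi_div_ge[OF q] by simp
  qed
  show ?thesis
  proof (cases "2 * d \<le> q")
    case True
    then show ?thesis
      using low_half assms by simp
  next
    case False
    have "sin (pi * real d / real q) = sin (pi - pi * real (q - d) / real q)"
      using assms by (simp add: field_simps)
    then show ?thesis
      using low_half[of "q - d"] False assms by simp
  qed
qed

lemma norm_cis_minus_1_squared: "(norm (cis t - 1))\<^sup>2 = 4 * (sin (t / 2))\<^sup>2"
proof -
  have "(norm (cis t - 1))\<^sup>2 = (cos t - 1)\<^sup>2 + (sin t)\<^sup>2"
    by (simp add: cmod_power2)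
  also have "\<dots> = 2 - 2 * cos (2 * (t / 2))"
    using sin_cos_squared_add[of t] by (simp add: power2_eq_square algebra_simps)
  also have "\<dots> = 4 * (sin (t / 2))\<^sup>2"
    using cos_double_sin[of "t / 2"] by simp
  finally show ?thesis .
qed

lemma omega_power_dist:
  assumes "j < q" "l < q" "j \<noteq> l"
  shows "2 / real q \<le> norm (omega q ^ j - omega q ^ l)"
proof -
  have ordered: "2 / real q \<le> norm (omega q ^ j - omega q ^ l)" if "l < j" "j < q" for j l
  proof -
    define d where "d = j - l"
    have d: "1 \<le> d" "d < q"
      using that by (auto simp: d_def)
    have "omega q ^ j - omega q ^ l = omega q ^ l * (omega q ^ d - 1)"
      using that by (simp add: d_def algebra_simps flip: power_add)
    then have dist: "norm (omega q ^ j - omega q ^ l) = norm (cis (2 * pi * real d / real q) - 1)"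
      by (simp add: norm_mult omega_power)
    have "(1 / real q)\<^sup>2 \<le> (sin (pi * real d / real q))\<^sup>2"
      using sin_pi_mult_div_ge[OF d] by (intro power_mono) auto
    then have "(2 / real q)\<^sup>2 \<le> (norm (cis (2 * pi * real d / real q) - 1))\<^sup>2"
      by (simp add: norm_cis_minus_1_squared power_divide)
    then show ?thesis
      unfolding dist by (meson norm_ge_zero power2_le_imp_le)
  qed
  show ?thesis
  proof (cases "l < j")
    case True
    then show ?thesis
      using ordered assms by simp
  next
    case False
    then show ?thesis
      using ordered[of j l] assms by (simp add: norm_minus_commute)
  qed
qed

lemma norm_coeff_le_roots_of_unity_bound:
  fixes p :: "complex poly"
  assumes q: "q > 0" and deg: "degree p < q" and a: "a < q"
    and bound: "\<And>j. j < q \<Longrightarrow> norm (poly p (omega q ^ j)) \<le> B"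
  shows "norm (coeff p a) \<le> B"
proof -
  have poly_root: "poly p (omega q ^ j) = (\<Sum>l<q. omega q ^ (j * l) * coeff p l)" for j
    unfolding poly_eq_sum_lessThan[OF deg] power_mult by (simp add: mult.commute)
  have "real q * norm (coeff p a) = norm (\<Sum>j<q. cnj (omega q) ^ (a * j) * poly p (omega q ^ j))"
    using discrete_fourier_inversion[OF q a, of "coeff p"] by (simp add: poly_root norm_mult)
  also have "\<dots> \<le> (\<Sum>j<q. norm (poly p (omega q ^ j)))"
    by (rule order.trans[OF norm_sum]) (simp add: norm_mult norm_power)
  also have "\<dots> \<le> real q * B"
    using bound sum_mono[of "{..<q}" "\<lambda>j. norm (poly p (omega q ^ j))" "\<lambda>_. B"] by simp
  finally show ?thesis
    using q by simp
qed

lemma prod_norm_omega_diff_eq: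
  assumes q: "q > 0" and j: "j < q"
  shows "(\<Prod>r\<in>{..<q} - {j}. norm (omega q ^ j - omega q ^ r)) = (\<Prod>d\<in>{1..<q}. norm (1 - omega q ^ d))"
proof (rule prod.reindex_bij_witness[where i = "\<lambda>d. if d + j < q then d + j else d + j - q"
                                     and j = "\<lambda>r. if j \<le> r then r - j else r + q - j"])
  fix r assume r: "r \<in> {..<q} - {j}"
  show "(if (if j \<le> r then r - j else r + q - j) + j < q then (if j \<le> r then r - j else r + q - j) + j
         else (if j \<le> r then r - j else r + q - j) + j - q) = r"
    using r j by auto
  show "(if j \<le> r then r - j else r + q - j) \<in> {1..<q}"
    using r j by auto
  have "omega q ^ j * omega q ^ (if j \<le> r then r - j else r + q - j) = omega q ^ r"
  proof (cases "j \<le> r")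
    case True
    then show ?thesis
      by (simp flip: power_add)
  next
    case False
    have "j + (r + q - j) = r + q"
      using j r by simp
    then have "omega q ^ j * omega q ^ (r + q - j) = omega q ^ r * omega q ^ q"
      by (simp flip: power_add)
    then show ?thesis
      using False omega_power_eq_1[OF q] by simp
  qed
  then have "omega q ^ j - omega q ^ r = omega q ^ j * (1 - omega q ^ (if j \<le> r then r - j else r + q - j))"
    by (simp add: algebra_simps)
  then show "norm (1 - omega q ^ (if j \<le> r then r - j else r + q - j)) = norm (omega q ^ j - omega q ^ r)"
    by (simp add: norm_mult)
next
  fix d assume d: "d \<in> {1..<q}"
  show "(if j \<le> (if d + j < q then d + j else d + j - q) then (if d + j < q then d + j else d + j - q) - j
         else (if d + j < q then d + j else d + j - q) + q - j) = d"
    using d j by auto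
  show "(if d + j < q then d + j else d + j - q) \<in> {..<q} - {j}"
    using d j by auto
qed

lemma prod_norm_omega_diff_le:
  assumes E: "E \<subseteq> {..<q}" and j: "j < q" and l: "l < q" "l \<notin> E"
  shows "(\<Prod>r\<in>E. norm (omega q ^ j - omega q ^ r))
         \<le> real q ^ (q - card E - 1) * (\<Prod>r\<in>E. norm (omega q ^ l - omega q ^ r))"
proof -
  define D where "D x = (\<Prod>r\<in>E. norm (omega q ^ x - omega q ^ r))" for x
  define U where "U x = {..<q} - E - {x}" for x
  define m where "m = q - card E - 1"
  have q: "q > 0"
    using j by simp
  have finE: "finite E"
    using E finite_subset by blast
  have D_nonneg: "0 \<le> D x" for x
    unfolding D_def by (intro prod_nonneg) simp
  have split: "D x * (\<Prod>r\<in>U x. norm (omega q ^ x - omega q ^ r)) = (\<Prod>d\<in>{1..<q}. norm (1 - omega q ^ d))"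
    if "x < q" "x \<notin> E" for x
  proof -
    have "{..<q} - {x} = E \<union> U x"
      using E that by (auto simp: U_def)
    then have "(\<Prod>d\<in>{1..<q}. norm (1 - omega q ^ d)) = (\<Prod>r\<in>E \<union> U x. norm (omega q ^ x - omega q ^ r))"
      using prod_norm_omega_diff_eq[OF q that(1)] by simp
    also have "\<dots> = D x * (\<Prod>r\<in>U x. norm (omega q ^ x - omega q ^ r))"
      unfolding D_def by (rule prod.union_disjoint) (auto simp: finE U_def)
    finally show ?thesis ..
  qed
  have card_U: "card (U x) = m" if "x < q" "x \<notin> E" for x
  proof -
    have "card ({..<q} - E) = q - card E"
      using E finE by (simp add: card_Diff_subset)
    then show ?thesis
      using that by (simp add: U_def m_def card_Diff_singleton)
  qed
  show ?thesis
  proof (cases "j \<in> E")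
    case True
    then have "D j = 0"
      unfolding D_def using finE by simp blast
    then show ?thesis
      using D_nonneg[of l] unfolding D_def by simp
  next
    case False
    have "D j * (2 / real q) ^ m = D j * (\<Prod>r\<in>U j. 2 / real q)"
      using card_U[OF j False] by simp
    also have "\<dots> \<le> D j * (\<Prod>r\<in>U j. norm (omega q ^ j - omega q ^ r))"
      using j D_nonneg by (intro mult_left_mono prod_mono) (auto simp: U_def intro: omega_power_dist)
    also have "\<dots> = D l * (\<Prod>r\<in>U l. norm (omega q ^ l - omega q ^ r))"
      using split[OF j False] split[OF l] by simp
    also have "\<dots> \<le> D l * (\<Prod>r\<in>U l. 2)"
      using D_nonneg norm_omega_power_diff_le by (intro mult_left_mono prod_mono) auto
    also have "\<dots> = D l * 2 ^ m"
      using card_U[OF l] by simp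
    finally have "D j * 2 ^ m \<le> D l * 2 ^ m * real q ^ m"
      using q by (simp add: field_simps)
    then show ?thesis
      unfolding D_def m_def by (simp add: mult_ac)
  qed
qed

lemma norm_poly_lagrange_basis_roots_of_unity_le:
  assumes K: "K \<le> q" and e: "inj_on e {..<K}" "\<forall>b<K. e b < q" and b: "b < K" and j: "j < q"
  shows "norm (poly (lagrange_basis (\<lambda>i. omega q ^ e i) K b) (omega q ^ j)) \<le> real q ^ (q - K)"
proof -
  define I where "I = {..<K} - {b}"
  define E where "E = e ` I"
  have q: "q > 0"
    using j by simp
  have inj_I: "inj_on e I"
    using e(1) by (rule inj_on_subset) (auto simp: I_def)
  have E: "E \<subseteq> {..<q}"
    using e(2) by (auto simp: E_def I_def)
  have card_E: "card E = K - 1"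
    using b card_image[OF inj_I] by (simp add: E_def I_def)
  have eb: "e b < q" "e b \<notin> E"
    using e b by (auto simp: E_def I_def inj_on_eq_iff)
  have reindex: "(\<Prod>i\<in>I. norm (omega q ^ x - omega q ^ e i)) = (\<Prod>r\<in>E. norm (omega q ^ x - omega q ^ r))" for x
    by (simp add: E_def prod.reindex[OF inj_I])
  have "omega q ^ e b - omega q ^ e i \<noteq> 0" if "i \<in> I" for i
    using that e b omega_power_eq_iff[OF q] by (auto simp: I_def inj_on_eq_iff)
  then have denominator: "0 < (\<Prod>i\<in>I. norm (omega q ^ e b - omega q ^ e i))"
    by (intro prod_pos) auto
  have "norm (poly (lagrange_basis (\<lambda>i. omega q ^ e i) K b) (omega q ^ j))
      = (\<Prod>i\<in>I. norm (omega q ^ j - omega q ^ e i)) / (\<Prod>i\<in>I. norm (omega q ^ e b - omega q ^ e i))"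
    by (simp add: poly_lagrange_basis I_def norm_divide prod_dividef flip: prod_norm)
  also have "\<dots> \<le> real q ^ (q - K)"
    using prod_norm_omega_diff_le[OF E j eb] card_E b denominator
    by (simp add: reindex divide_le_eq)
  finally show ?thesis .
qed

lemma norm_lagrange_mat_roots_of_unity_le:
  assumes "K \<le> q" "inj_on e {..<K}" "\<forall>b<K. e b < q" "b < K" "a < K"
  shows "norm (lagrange_mat (\<lambda>i. omega q ^ e i) K $$ (b, a)) \<le> real q ^ (q - K)"
  unfolding lagrange_mat_index[OF assms(4,5)]
proof (rule norm_coeff_le_roots_of_unity_bound)
  show "0 < q" "a < q" "degree (lagrange_basis (\<lambda>i. omega q ^ e i) K b) < q"
    using assms degree_lagrange_basis[OF assms(4), of "\<lambda>i. omega q ^ e i"] by auto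
qed (use assms norm_poly_lagrange_basis_roots_of_unity_le in auto)

lemma cond_num_vandermonde_roots_of_unity_le:
  assumes K: "0 < K" "K \<le> q" and e: "inj_on e {..<K}" "\<forall>b<K. e b < q"
  shows "cond_num (vandermonde (\<lambda>b. omega q ^ e b) K) \<le> real q ^ (q - K) * real K ^ 3"
proof -
  let ?z = "\<lambda>b. omega q ^ e b"
  have inj: "inj_on ?z {..<K}"
    using K e by (intro inj_on_omega_power) auto
  have "norm (vandermonde ?z K $$ (a, b)) \<le> 1" if "a < K" "b < K" for a b
    using that by (simp add: vandermonde_index norm_power)
  then have V: "spec_norm (vandermonde ?z K) \<le> 1 * real K * sqrt (real K)"
    using spec_norm_le_entry_bound[OF vandermonde_carrier K(1), where B = 1] by blast
  have L: "0 \<le> spec_norm (lagrange_mat ?z K)"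
      "spec_norm (lagrange_mat ?z K) \<le> real q ^ (q - K) * real K * sqrt (real K)"
    using spec_norm_le_entry_bound[OF lagrange_mat_carrier K(1), where B = "real q ^ (q - K)"]
      norm_lagrange_mat_roots_of_unity_le[OF K(2) e] by auto
  have "cond_num (vandermonde ?z K) = spec_norm (vandermonde ?z K) * spec_norm (lagrange_mat ?z K)"
    by (simp add: cond_num_def mat_inv_vandermonde[OF inj])
  also have "\<dots> \<le> (1 * real K * sqrt (real K)) * (real q ^ (q - K) * real K * sqrt (real K))"
    using V L by (intro mult_mono) auto
  also have "\<dots> = real q ^ (q - K) * real K ^ 3"
    by (simp add: power3_eq_cube mult_ac)
  finally show ?thesis .
qed

section \<open>Decoding and the recovery matrices\<close>

lemma inj_on_mult_mod_prime:
  fixes idx :: "'a \<Rightarrow> nat"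
  assumes q: "prime q" and k: "\<not> q dvd k" and idx: "inj_on idx A" "\<forall>b\<in>A. idx b < q"
  shows "inj_on (\<lambda>b. idx b * k mod q) A"
proof (rule inj_onI)
  fix x y assume xy: "x \<in> A" "y \<in> A" "idx x * k mod q = idx y * k mod q"
  have "coprime k q"
    using prime_imp_coprime[OF q k] by (simp add: coprime_commute)
  then have "[idx x = idx y] (mod q)"
    using xy(3) by (simp add: cong_def[symmetric] cong_mult_rcancel_nat)
  then have "idx x = idx y"
    using idx(2) xy by (simp add: cong_def)
  then show "x = y"
    using idx(1) xy by (auto dest: inj_onD)
qed

lemma GFd_eq_vandermonde:
  assumes "q > 0"
  shows "GFd q kA idx k = vandermonde (\<lambda>b. omega q ^ (idx b * k mod q)) kA"
  by (rule eq_matI) (auto simp: GFd_def vandermonde_def omega_power_mod[OF assms] mult_ac simp flip: power_mult)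

lemma det_GFd_neq_0:
  assumes q: "prime q" and idx: "inj_on idx {..<kA}" "\<forall>b<kA. idx b < q" and k: "0 < k" "k < q"
  shows "det (GFd q kA idx k) \<noteq> 0"
proof -
  have "\<not> q dvd k"
    using k by (auto dest: dvd_imp_le)
  then have "inj_on (\<lambda>b. omega q ^ (idx b * k mod q)) {..<kA}"
    using q idx prime_gt_0_nat[OF q] by (intro inj_on_omega_power inj_on_mult_mod_prime) auto
  then show ?thesis
    unfolding GFd_eq_vandermonde[OF prime_gt_0_nat[OF q]] by (rule det_vandermonde_neq_0)
qed

lemma cond_num_GFd_le:
  assumes q: "prime q" and kA: "0 < kA" "kA \<le> q" and idx: "inj_on idx {..<kA}" "\<forall>b<kA. idx b < q"
    and k: "0 < k" "k < q"
  shows "cond_num (GFd q kA idx k) \<le> real q powr (real q - real kA + 3)"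
proof -
  have "\<not> q dvd k"
    using k by (auto dest: dvd_imp_le)
  then have "inj_on (\<lambda>b. idx b * k mod q) {..<kA}"
    using q idx by (intro inj_on_mult_mod_prime) auto
  then have "cond_num (GFd q kA idx k) \<le> real q ^ (q - kA) * real kA ^ 3"
    unfolding GFd_eq_vandermonde[OF prime_gt_0_nat[OF q]]
    using kA prime_gt_0_nat[OF q] by (intro cond_num_vandermonde_roots_of_unity_le) auto
  also have "\<dots> \<le> real q ^ (q - kA) * real q ^ 3"
    using kA by (intro mult_left_mono power_mono) auto
  also have "\<dots> = real q ^ (q - kA + 3)"
    by (simp add: power_add)
  also have "\<dots> = real q powr real (q - kA + 3)"
    using prime_gt_0_nat[OF q] by (intro powr_realpow[symmetric]) simp
  also have "real (q - kA + 3) = real q - real kA + 3"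
    using kA by (simp add: of_nat_diff)
  finally show ?thesis .
qed

lemma decode_correct:
  assumes q: "prime q" and n: "n \<le> q" and idx: "inj_on idx {..<kA}" "\<forall>b<kA. idx b < n"
    and zero_sum: "\<forall>\<alpha><kA. (\<Sum>\<beta><q. m \<alpha> \<beta>) = 0"
    and code: "\<forall>b<kA. \<forall>j<q. c b j = (\<Sum>\<alpha><kA. \<Sum>\<beta><q. m \<alpha> \<beta> * Gcirc kA n q $$ (\<alpha> * q + \<beta>, idx b * q + j))"
    and \<alpha>: "\<alpha> < kA" and \<beta>: "\<beta> < q"
  shows "decode q kA idx c \<alpha> \<beta> = complex_of_real (m \<alpha> \<beta>)"
proof -
  have q0: "q > 0"
    using prime_gt_0_nat[OF q] .
  define M where "M a = dft q (\<lambda>\<beta>'. complex_of_real (m a \<beta>'))" for a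
  have spectrum: "dft q (\<lambda>j. complex_of_real (c b j)) k = (\<Sum>a<kA. M a k * (omega q ^ (idx b * k mod q)) ^ a)"
    if "b < kA" for b k
  proof -
    have "dft q (\<lambda>j. complex_of_real (c b j)) k
        = dft q (\<lambda>j. complex_of_real (\<Sum>a<kA. \<Sum>\<beta>'<q. m a \<beta>' * Gcirc kA n q $$ (a * q + \<beta>', idx b * q + j))) k"
      using code that by (intro dft_cong) simp
    also have "\<dots> = (\<Sum>a<kA. M a k * (omega q ^ (idx b * k)) ^ a)"
      unfolding M_def using q0 idx(2) that by (intro dft_Gcirc_block_column) auto
    finally show ?thesis
      by (simp add: omega_power_mod[OF q0])
  qed
  have solution: "(if k = 0 then 0\<^sub>v kA else THE y. y \<in> carrier_vec kA \<and>
        (\<forall>b<kA. (\<Sum>a<kA. y $ a * GFd q kA idx k $$ (a, b)) = dft q (\<lambda>j. complex_of_real (c b j)) k)) $ \<alpha>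
      = M \<alpha> k" if "k < q" for k
  proof (cases "k = 0")
    case True
    then show ?thesis
      using zero_sum \<alpha> by (simp add: M_def dft_0 flip: of_real_sum)
  next
    case False
    then have "\<not> q dvd k"
      using that by (auto dest: dvd_imp_le)
    then have "inj_on (\<lambda>b. omega q ^ (idx b * k mod q)) {..<kA}"
      using q idx n q0 by (intro inj_on_omega_power inj_on_mult_mod_prime) auto
    then show ?thesis
      using False \<alpha> spectrum
      by (simp add: GFd_eq_vandermonde[OF q0] the_vandermonde_solution[where r = "\<lambda>a. M a k"])
  qed
  have "decode q kA idx c \<alpha> \<beta> = idft q (M \<alpha>) \<beta>"
    unfolding decode_def Let_def idft_def using solution by (intro sum.cong refl) simp
  also have "\<dots> = complex_of_real (m \<alpha> \<beta>)"
    unfolding M_def using idft_dft[OF q0 \<beta>] .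
  finally show ?thesis .
qed

lemma Gcirc_code_injective:
  assumes q: "prime q" and n: "n \<le> q" and idx: "inj_on idx {..<kA}" "\<forall>b<kA. idx b < n"
    and zero_sum: "\<forall>\<alpha><kA. (\<Sum>\<beta><q. m \<alpha> \<beta>) = 0"
    and code: "\<forall>b<kA. \<forall>j<q. c b j = (\<Sum>\<alpha><kA. \<Sum>\<beta><q. m \<alpha> \<beta> * Gcirc kA n q $$ (\<alpha> * q + \<beta>, idx b * q + j))"
    and zero_sum': "\<forall>\<alpha><kA. (\<Sum>\<beta><q. m' \<alpha> \<beta>) = 0"
    and code': "\<forall>b<kA. \<forall>j<q. c b j = (\<Sum>\<alpha><kA. \<Sum>\<beta><q. m' \<alpha> \<beta> * Gcirc kA n q $$ (\<alpha> * q + \<beta>, idx b * q + j))"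
    and "\<alpha> < kA" "\<beta> < q"
  shows "m' \<alpha> \<beta> = m \<alpha> \<beta>"
  using decode_correct[OF q n idx zero_sum code] decode_correct[OF q n idx zero_sum' code'] assms(9,10)
  by simp

theorem theorem3:
  shows "(\<forall>n q kA t w A x idx p.
            prime q \<and> n \<le> q \<and> 1 \<le> kA \<and> kA \<le> n \<and>
            inj_on idx {..<kA} \<and> (\<forall>b<kA. idx b < n) \<and> p < w \<longrightarrow>
            (let m = (\<lambda>\<alpha> \<beta>. matT_x t (Ablk q w A \<alpha> \<beta>) x p);
                 c = (\<lambda>b j. matT_x t (Ahat kA n q w A (idx b) j) x p)
             in (\<forall>b<kA. \<forall>j<q. c b j =
                    (\<Sum>\<alpha><kA. \<Sum>\<beta><q. m \<alpha> \<beta> * Gcirc kA n q $$ (\<alpha> * q + \<beta>, idx b * q + j)))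
              \<and> (\<forall>m'. (\<forall>\<alpha><kA. (\<Sum>\<beta><q. m' \<alpha> \<beta>) = 0) \<and>
                      (\<forall>b<kA. \<forall>j<q. c b j =
                         (\<Sum>\<alpha><kA. \<Sum>\<beta><q. m' \<alpha> \<beta> * Gcirc kA n q $$ (\<alpha> * q + \<beta>, idx b * q + j)))
                      \<longrightarrow> (\<forall>\<alpha><kA. \<forall>\<beta><q. m' \<alpha> \<beta> = m \<alpha> \<beta>))
              \<and> (\<forall>\<alpha><kA. \<forall>\<beta><q. decode q kA idx c \<alpha> \<beta> = complex_of_real (m \<alpha> \<beta>))))
       \<and> (\<exists>C::real. C > 0 \<and>
            (\<forall>n q kA idx k.
               prime q \<and> n \<le> q \<and> 1 \<le> kA \<and> kA \<le> n \<and>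
               inj_on idx {..<kA} \<and> (\<forall>b<kA. idx b < n) \<and> 1 \<le> k \<and> k < q \<longrightarrow>
               det (GFd q kA idx k) \<noteq> 0 \<and>
               cond_num (GFd q kA idx k) \<le> C * real q powr (real q - real kA + 5.5)))"
proof (intro conjI allI impI, goal_cases)
  case (1 n q kA t w A x idx p)
  then have q: "prime q" and n: "n \<le> q" and idx: "inj_on idx {..<kA}" "\<forall>b<kA. idx b < n"
    by auto
  let ?m = "\<lambda>\<alpha> \<beta>. matT_x t (Ablk q w A \<alpha> \<beta>) x p"
  let ?c = "\<lambda>b j. matT_x t (Ahat kA n q w A (idx b) j) x p"
  have code: "\<forall>b<kA. \<forall>j<q. ?c b j = (\<Sum>\<alpha><kA. \<Sum>\<beta><q. ?m \<alpha> \<beta> * Gcirc kA n q $$ (\<alpha> * q + \<beta>, idx b * q + j))"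
    by (simp add: matT_x_Ahat)
  have zero_sum: "\<forall>\<alpha><kA. (\<Sum>\<beta><q. ?m \<alpha> \<beta>) = 0"
    using sum_matT_x_Ablk_eq_0 prime_gt_0_nat[OF q] by blast
  show ?case
    unfolding Let_def
    using code Gcirc_code_injective[OF q n idx zero_sum code] decode_correct[OF q n idx zero_sum code]
    by blast
next
  case 2
  have "det (GFd q kA idx k) \<noteq> 0 \<and> cond_num (GFd q kA idx k) \<le> 1 * real q powr (real q - real kA + 5.5)"
    if "prime q" "n \<le> q" "1 \<le> kA" "kA \<le> n" "inj_on idx {..<kA}" "\<forall>b<kA. idx b < n" "1 \<le> k" "k < q"
    for n q kA idx k
  proof -
    have idx: "\<forall>b<kA. idx b < q"
      using that(2,6) by auto
    have "cond_num (GFd q kA idx k) \<le> real q powr (real q - real kA + 3)"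
      using cond_num_GFd_le[OF that(1) _ _ that(5) idx] that by simp
    also have "\<dots> \<le> real q powr (real q - real kA + 5.5)"
      using prime_gt_1_nat[OF that(1)] by (intro powr_mono) auto
    finally show ?thesis
      using det_GFd_neq_0[OF that(1,5) idx] that by simp
  qed
  then show ?case
    by (intro exI[of _ 1]) auto
qed

end
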